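(* Fix $\alpha\in(0,1)$, integers $d\ge1$, $b\ge2$, $0\le t\le m$, $n=b^m$, and a parameter set $\Theta\subset\mathbb{R}$ with measurable functions $g_\theta:(0,1)^d\to\mathbb{R}$, $\theta\in\Theta$. Assume that for every $\theta\in\Theta$, $g_\theta(\boldsymbol u)$ is a continuous random variable whenever $d-1$ components of $\boldsymbol u$ are fixed and the remaining component is uniformly distributed over an open interval in $(0,1)$. Fix $\theta\in\Theta$, let $v_\alpha=\inf\{y:\mathbb{P}(g_\theta(\boldsymbol u)\le y)\ge\alpha\}$ for $\boldsymbol u\sim\mathrm{Unif}((0,1)^d)$, let $\boldsymbol u_1,\dots,\boldsymbol u_n$ be a scrambled $(t,m,d)$-net in base $b$, $L_i=g_\theta(\boldsymbol u_i)$, $\hat F_n(y)=\frac1n\sum_{i=1}^n\mathbf 1\{L_i\le y\}$ and $\hat v_{\alpha,n}=\inf\{y:\hat F_n(y)\ge\alpha\}$. Then with probability one, $$\big|\hat F_n(\hat v_{\alpha,n})-\hat F_n(v_\alpha)\big|\le\frac{b^t}{n}+\big|\hat F_n(v_\alpha)-\alpha\big|.$$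
   Context: An elementary interval in base $b$ is a set $\prod_{j=1}^d[t_j b^{-k_j},(t_j+1)b^{-k_j})$ with nonnegative integers $k_j$ and $0\le t_j<b^{k_j}$. A finite sequence $\boldsymbol u_1,\dots,\boldsymbol u_{b^m}\in[0,1)^d$ is a $(t,m,d)$-net in base $b$ if every elementary interval in base $b$ of volume $b^{t-m}$ contains exactly $b^t$ of the points. A scrambled net is obtained from a $(t,m,d)$-net by Owen's nested uniform scrambling: writing each coordinate $u_i^j=\sum_{k\ge1}a_{ijk}b^{-k}$ in base $b$, the scrambled coordinate is $\tilde u_i^j=\sum_{k\ge1}\tilde a_{ijk}b^{-k}$ with $\tilde a_{ijk}=\pi_{j a_{ij1}\cdots a_{ij,k-1}}(a_{ijk})$ (for $k=1$, $\pi_j(a_{ij1})$), where the permutations $\pi_\bullet$ are mutually independent and each uniformly distributed over the permutations of $\{0,\dots,b-1\}$. *)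

theory Defs
  imports "HOL-Probability.Probability" "HOL-Combinatorics.Permutations"
begin

definition elem_interval :: "nat \<Rightarrow> ('d::finite \<Rightarrow> nat) \<Rightarrow> ('d \<Rightarrow> nat) \<Rightarrow> (real^'d) set" where
  "elem_interval b k T =
     {x. \<forall>j. real (T j) / real b ^ k j \<le> x $ j \<and> x $ j < (real (T j) + 1) / real b ^ k j}"

definition is_tmd_net :: "nat \<Rightarrow> nat \<Rightarrow> nat \<Rightarrow> (nat \<Rightarrow> real^'d::finite) \<Rightarrow> bool" where
  "is_tmd_net b t m u \<longleftrightarrow>
     (\<forall>i < b ^ m. \<forall>j. 0 \<le> u i $ j \<and> u i $ j < 1) \<and>
     (\<forall>k T. (\<forall>j. T j < b ^ k j) \<and> (\<Sum>j\<in>UNIV. k j) = m - t \<longrightarrow>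
        card {i. i < b ^ m \<and> u i \<in> elem_interval b k T} = b ^ t)"

text \<open>k-th base-b digit (k \<ge> 1) of x in [0,1): x = sum_{k\<ge>1} a_k b^{-k}.\<close>
definition digit :: "nat \<Rightarrow> real \<Rightarrow> nat \<Rightarrow> nat" where
  "digit b x k = nat \<lfloor>x * real b ^ k\<rfloor> mod b"

definition digit_prefix :: "nat \<Rightarrow> real \<Rightarrow> nat \<Rightarrow> nat list" where
  "digit_prefix b x k = map (digit b x) [1..<k]"

text \<open>Owen's nested scrambling of one coordinate, given the family of permutations
  p :: nat list \<Rightarrow> nat \<Rightarrow> nat (indexed by the digit prefix) for that coordinate.\<close>
definition scramble_coord :: "nat \<Rightarrow> (nat list \<Rightarrow> nat \<Rightarrow> nat) \<Rightarrow> real \<Rightarrow> real" where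
  "scramble_coord b p x =
     (\<Sum>k. real (p (digit_prefix b x (Suc k)) (digit b x (Suc k))) / real b ^ Suc k)"

definition scramble_point :: "nat \<Rightarrow> ('d::finite \<times> nat list \<Rightarrow> nat \<Rightarrow> nat) \<Rightarrow> real^'d \<Rightarrow> real^'d" where
  "scramble_point b \<sigma> x = (\<chi> j. scramble_coord b (\<lambda>ds. \<sigma> (j, ds)) (x $ j))"

definition scramble_space :: "nat \<Rightarrow> ('d::finite \<times> nat list \<Rightarrow> nat \<Rightarrow> nat) measure" where
  "scramble_space b = PiM UNIV (\<lambda>_. measure_pmf (pmf_of_set {p. p permutes {0..<b}}))"

definition emp_cdf :: "nat \<Rightarrow> (nat \<Rightarrow> real) \<Rightarrow> real \<Rightarrow> real" where
  "emp_cdf n L y = real (card {i. i < n \<and> L i \<le> y}) / real n"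

end

theory Submission
  imports Defs
begin

text \<open>
  A coordinate of a scrambled point is a digit series whose digits are values of independent
  uniform permutations at distinct nodes of the digit tree, so it is uniformly distributed.
  If two net points differ, their \<open>j\<close>-th coordinates differ within the first \<open>K\<close> digits
  for some \<open>j\<close> and \<open>K\<close>. Conditionally on the permutations outside the subtree below the first
  \<open>K\<close> digits of the first point, its scrambled \<open>j\<close>-th coordinate is uniform on an interval
  while the second scrambled point is fixed, so by the continuity hypothesis the two values of
  \<open>g\<close> differ almost surely. Hence ties among the \<open>L\<^sub>i\<close> come almost surely only from repeated
  net points, and a point is repeated at most \<open>b ^ t\<close> times because all its copies lie in one
  elementary interval of volume \<open>b ^ (t - m)\<close>. So the empirical CDF jumps by at most
  \<open>b ^ t / n\<close>, and at the empirical quantile it exceeds \<open>\<alpha>\<close> by at most that much. The bound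
  holds for every \<open>v\<close>, not only for the true quantile.
\<close>

section \<open>Uniform random permutations and digit series\<close>

definition digit_perms :: "nat \<Rightarrow> (nat \<Rightarrow> nat) set" where
  "digit_perms b = {p. p permutes {0..<b}}"

abbreviation uniform_perm :: "nat \<Rightarrow> (nat \<Rightarrow> nat) measure" where
  "uniform_perm b \<equiv> measure_pmf (pmf_of_set (digit_perms b))"

lemma finite_digit_perms: "finite (digit_perms b)"
  unfolding digit_perms_def by (rule finite_permutations) simp

lemma digit_perms_nonempty: "digit_perms b \<noteq> {}"
  unfolding digit_perms_def using permutes_id by blast

lemma digit_perms_less: "p \<in> digit_perms b \<Longrightarrow> e < b \<Longrightarrow> p e < b"
  unfolding digit_perms_def using permutes_in_image by fastforce

lemma transpose_comp_digit_perms: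
  "p \<in> digit_perms b \<Longrightarrow> q < b \<Longrightarrow> q' < b \<Longrightarrow> Transposition.transpose q q' \<circ> p \<in> digit_perms b"
  unfolding digit_perms_def mem_Collect_eq
  by (rule permutes_compose, assumption, rule permutes_swap_id, auto)

lemma card_digit_perms_value_eq:
  assumes "q < b" "q' < b"
  shows "card {p \<in> digit_perms b. p e = q} = card {p \<in> digit_perms b. p e = q'}"
proof -
  let ?swap = "\<lambda>p. Transposition.transpose q q' \<circ> p"
  have "bij_betw ?swap {p \<in> digit_perms b. p e = q} {p \<in> digit_perms b. p e = q'}"
    by (rule bij_betw_byWitness[where f' = ?swap])
      (use assms in \<open>auto simp: fun_eq_iff intro!: transpose_comp_digit_perms\<close>)
  then show ?thesis by (rule bij_betw_same_card)
qed

lemma card_digit_perms_value: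
  assumes "e < b" "q < b"
  shows "real (card {p \<in> digit_perms b. p e = q}) = real (card (digit_perms b)) / real b"
proof -
  have "digit_perms b = (\<Union>r<b. {p \<in> digit_perms b. p e = r})"
    using digit_perms_less[OF _ assms(1)] by auto
  also have "card \<dots> = (\<Sum>r<b. card {p \<in> digit_perms b. p e = r})"
    by (rule card_UN_disjoint) (auto intro: finite_subset[OF _ finite_digit_perms])
  also have "\<dots> = b * card {p \<in> digit_perms b. p e = q}"
    using card_digit_perms_value_eq[OF _ assms(2)] by simp
  finally show ?thesis
    using assms by (simp add: field_simps)
qed

text \<open>Digits are clipped to \<open>{0..<b}\<close>, so that digit series are bounded for every
  family of maps and not only for the permutations that occur almost surely.\<close>
definition clip_digit :: "nat \<Rightarrow> nat \<Rightarrow> nat" where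
  "clip_digit b n = min n (b - 1)"

lemma clip_digit_less: "0 < b \<Longrightarrow> clip_digit b n < b"
  by (simp add: clip_digit_def)

lemma clip_digit_id: "n < b \<Longrightarrow> clip_digit b n = n"
  by (simp add: clip_digit_def)

lemma prob_uniform_perm_digit:
  assumes "e < b" "q < b"
  shows "measure (uniform_perm b) {p. clip_digit b (p e) = q} = 1 / real b"
proof -
  have "digit_perms b \<inter> {p. clip_digit b (p e) = q} = {p \<in> digit_perms b. p e = q}"
    by (auto simp: clip_digit_def min_def dest: digit_perms_less[OF _ assms(1)])
  moreover have "real (card (digit_perms b)) > 0"
    using digit_perms_nonempty finite_digit_perms by (simp add: card_gt_0_iff)
  ultimately show ?thesis
    using card_digit_perms_value[OF assms]
    by (simp add: measure_pmf_of_set[OF digit_perms_nonempty finite_digit_perms])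
qed

definition digit_series :: "nat \<Rightarrow> (nat \<Rightarrow> nat) \<Rightarrow> real" where
  "digit_series b f = (\<Sum>k. real (clip_digit b (f k)) / real b ^ Suc k)"

primrec digits_nat :: "nat \<Rightarrow> (nat \<Rightarrow> nat) \<Rightarrow> nat \<Rightarrow> nat" where
  "digits_nat b f 0 = 0"
| "digits_nat b f (Suc k) = b * digits_nat b f k + clip_digit b (f k)"

lemma sums_max_digits:
  assumes "2 \<le> b"
  shows "(\<lambda>k. (real b - 1) / real b ^ Suc k) sums 1"
proof -
  have "(\<lambda>k. (real b - 1) / real b ^ Suc k) = (\<lambda>k. (real b - 1) / real b * (1 / real b) ^ k)"
    by (simp add: power_one_over field_simps)
  moreover have "(\<lambda>k. (real b - 1) / real b * (1 / real b) ^ k) sums ((real b - 1) / real b * (1 / (1 - 1 / real b)))"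
    using assms by (intro sums_mult geometric_sums) simp
  moreover have "(real b - 1) / real b * (1 / (1 - 1 / real b)) = 1"
    using assms by (simp add: field_simps)
  ultimately show ?thesis by metis
qed

lemma digit_series_term_le:
  "2 \<le> b \<Longrightarrow> real (clip_digit b n) / real b ^ Suc k \<le> (real b - 1) / real b ^ Suc k"
  by (intro divide_right_mono) (auto simp: clip_digit_def)

lemma summable_digit_series:
  assumes "2 \<le> b"
  shows "summable (\<lambda>k. real (clip_digit b (f k)) / real b ^ Suc k)"
  by (rule summable_comparison_test'[OF sums_summable[OF sums_max_digits[OF assms]], of 0])
     (use digit_series_term_le[OF assms] in auto)

lemma digit_series_nonneg: "2 \<le> b \<Longrightarrow> 0 \<le> digit_series b f"
  unfolding digit_series_def by (intro suminf_nonneg summable_digit_series) auto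

lemma digit_series_le_1: "2 \<le> b \<Longrightarrow> digit_series b f \<le> 1"
  unfolding digit_series_def
  using suminf_le[OF digit_series_term_le summable_digit_series, of b f] sums_max_digits[of b]
  by (simp add: sums_iff)

lemma digit_series_partial_sum:
  assumes "0 < b"
  shows "(\<Sum>k<K. real (clip_digit b (f k)) / real b ^ Suc k) = real (digits_nat b f K) / real b ^ K"
proof (induction K)
  case (Suc K)
  then show ?case using assms by (simp add: field_simps)
qed simp

lemma digit_series_shift:
  assumes "2 \<le> b"
  shows "digit_series b f =
    (\<Sum>k<K. real (clip_digit b (f k)) / real b ^ Suc k) + digit_series b (\<lambda>k. f (k + K)) / real b ^ K"
proof -
  have "digit_series b f =
      (\<Sum>k. real (clip_digit b (f (k + K))) / real b ^ Suc (k + K)) + (\<Sum>k<K. real (clip_digit b (f k)) / real b ^ Suc k)"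
    unfolding digit_series_def by (rule suminf_split_initial_segment[OF summable_digit_series[OF assms]])
  also have "(\<Sum>k. real (clip_digit b (f (k + K))) / real b ^ Suc (k + K)) = digit_series b (\<lambda>k. f (k + K)) / real b ^ K"
    unfolding digit_series_def
    by (subst suminf_divide[OF summable_digit_series[OF assms], symmetric]) (simp add: power_add field_simps)
  finally show ?thesis by simp
qed

lemma digit_series_bounds:
  assumes "2 \<le> b"
  shows "real (digits_nat b f K) / real b ^ K \<le> digit_series b f"
    and "digit_series b f \<le> (real (digits_nat b f K) + 1) / real b ^ K"
proof -
  have "digit_series b f = (real (digits_nat b f K) + digit_series b (\<lambda>k. f (k + K))) / real b ^ K"
    using digit_series_shift[OF assms, of f K] digit_series_partial_sum[of b f K] assms
    by (simp add: add_divide_distrib)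
  then show "real (digits_nat b f K) / real b ^ K \<le> digit_series b f"
    and "digit_series b f \<le> (real (digits_nat b f K) + 1) / real b ^ K"
    using digit_series_nonneg[OF assms] digit_series_le_1[OF assms] assms
    by (simp_all add: divide_right_mono)
qed

lemma digits_nat_less: "0 < b \<Longrightarrow> digits_nat b f K < b ^ K"
proof (induction K)
  case (Suc K)
  have "b * digits_nat b f K + clip_digit b (f K) < b * (digits_nat b f K + 1)"
    using clip_digit_less[OF Suc.prems] by simp
  also have "\<dots> \<le> b * b ^ K"
    using Suc by (intro mult_le_mono2) simp
  finally show ?case by simp
qed simp

lemma digits_nat_eq_iff_digits:
  assumes "0 < b" "q < b ^ K"
  obtains w where "\<And>i. w i < b" "\<And>f. digits_nat b f K = q \<longleftrightarrow> (\<forall>i<K. clip_digit b (f i) = w i)"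
  using assms(2)
proof (induction K arbitrary: q thesis)
  case 0
  then show ?case using assms(1) by fastforce
next
  case (Suc K)
  have "q div b < b ^ K"
    using Suc.prems(2) assms(1) by (simp add: div_less_iff_less_mult mult.commute)
  then obtain w where w: "\<And>i. w i < b" "\<And>f. digits_nat b f K = q div b \<longleftrightarrow> (\<forall>i<K. clip_digit b (f i) = w i)"
    using Suc.IH by blast
  have "digits_nat b f (Suc K) = q \<longleftrightarrow> (\<forall>i<Suc K. clip_digit b (f i) = (w(K := q mod b)) i)" for f
  proof -
    have "b * D + c = q \<longleftrightarrow> D = q div b \<and> c = q mod b" if "c < b" for D c
      using that by auto
    then have "digits_nat b f (Suc K) = q \<longleftrightarrow> digits_nat b f K = q div b \<and> clip_digit b (f K) = q mod b"
      using clip_digit_less[OF assms(1)] by simp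
    then show ?thesis
      using w(2) by (auto simp: less_Suc_eq)
  qed
  then show ?case
    using w(1) assms(1) by (intro Suc.prems(1)[of "w(K := q mod b)"]) simp_all
qed

text \<open>The digits \<open>\<omega> (P k) (e k)\<close> read off independent uniform permutations at the
  distinct nodes \<open>P k\<close> are independent and uniform on \<open>{0..<b}\<close>, so their digit series is
  uniformly distributed on \<open>[0, 1]\<close>.\<close>
locale random_digit_series =
  fixes b :: nat and I :: "'i set" and P :: "nat \<Rightarrow> 'i" and e :: "nat \<Rightarrow> nat"
  assumes b: "2 \<le> b" and inj_P: "inj P" and P_in: "\<And>k. P k \<in> I" and e_less: "\<And>k. e k < b"
begin

abbreviation Q :: "('i \<Rightarrow> nat \<Rightarrow> nat) measure" where
  "Q \<equiv> PiM I (\<lambda>_. uniform_perm b)"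

abbreviation series :: "('i \<Rightarrow> nat \<Rightarrow> nat) \<Rightarrow> real" where
  "series \<omega> \<equiv> digit_series b (\<lambda>k. \<omega> (P k) (e k))"

abbreviation leading :: "('i \<Rightarrow> nat \<Rightarrow> nat) \<Rightarrow> nat \<Rightarrow> nat" where
  "leading \<omega> k \<equiv> digits_nat b (\<lambda>i. \<omega> (P i) (e i)) k"

sublocale prob_space Q
  by (rule prob_space_PiM) (rule measure_pmf.prob_space_axioms)

lemma measurable_digit[measurable]: "(\<lambda>\<omega>. real (clip_digit b (\<omega> (P k) (e k)))) \<in> borel_measurable Q"
  by (rule measurable_compose[OF measurable_component_singleton[OF P_in]]) simp

lemma measurable_leading[measurable]: "(\<lambda>\<omega>. real (leading \<omega> k)) \<in> borel_measurable Q"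
proof (induction k)
  case (Suc k)
  note [measurable] = Suc
  show ?case by simp measurable
qed simp

lemma measurable_series[measurable]: "series \<in> borel_measurable Q"
  unfolding digit_series_def by measurable

lemma sets_leading_less[measurable]: "{\<omega> \<in> space Q. leading \<omega> k < t} \<in> sets Q"
  using measurable_leading[of k, THEN borel_measurable_less[OF _ borel_measurable_const[of "real t"]]]
  by (simp add: pred_def)

lemma sets_leading_eq[measurable]: "{\<omega> \<in> space Q. leading \<omega> k = t} \<in> sets Q"
  using measurable_leading[of k, THEN borel_measurable_eq[OF _ borel_measurable_const[of "real t"]]]
  by (simp add: pred_def)

lemma prob_leading_digits:
  assumes "\<And>i. w i < b"
  shows "prob {\<omega> \<in> space Q. \<forall>i<k. clip_digit b (\<omega> (P i) (e i)) = w i} = (1 / real b) ^ k"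
proof -
  interpret product_prob_space "\<lambda>_. uniform_perm b" I
    by unfold_locales
  let ?X = "\<lambda>j. {p. clip_digit b (p (e (inv P j))) = w (inv P j)}"
  have "{\<omega> \<in> space Q. \<forall>i<k. clip_digit b (\<omega> (P i) (e i)) = w i} =
      {\<omega> \<in> space Q. \<forall>j\<in>P ` {..<k}. \<omega> j \<in> ?X j}"
    using inj_P by (auto simp: inv_f_f)
  then have "emeasure Q {\<omega> \<in> space Q. \<forall>i<k. clip_digit b (\<omega> (P i) (e i)) = w i} =
      (\<Prod>j\<in>P ` {..<k}. emeasure (uniform_perm b) (?X j))"
    by (simp only:) (rule emeasure_PiM_Collect, auto simp: P_in)
  also have "\<dots> = (\<Prod>i<k. emeasure (uniform_perm b) {p. clip_digit b (p (e i)) = w i})"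
    by (subst prod.reindex) (auto intro: inj_on_subset[OF inj_P] simp: inv_f_f[OF inj_P])
  also have "\<dots> = ennreal ((1 / real b) ^ k)"
    using prob_uniform_perm_digit[OF e_less assms]
    by (simp add: measure_pmf.emeasure_eq_measure ennreal_power)
  finally show ?thesis
    by (simp add: emeasure_eq_measure)
qed

lemma prob_leading_eq:
  assumes "q < b ^ k"
  shows "prob {\<omega> \<in> space Q. leading \<omega> k = q} = (1 / real b) ^ k"
proof -
  obtain w where "\<And>i. w i < b" "\<And>f. digits_nat b f k = q \<longleftrightarrow> (\<forall>i<k. clip_digit b (f i) = w i)"
    using digits_nat_eq_iff_digits[of b q k] b assms by auto
  then show ?thesis using prob_leading_digits[of w k] by simp
qed

lemma prob_leading_less:
  "t \<le> b ^ k \<Longrightarrow> prob {\<omega> \<in> space Q. leading \<omega> k < t} = real t / real b ^ k"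
proof (induction t)
  case (Suc t)
  have "{\<omega> \<in> space Q. leading \<omega> k < Suc t} =
      {\<omega> \<in> space Q. leading \<omega> k < t} \<union> {\<omega> \<in> space Q. leading \<omega> k = t}"
    by auto
  then have "prob {\<omega> \<in> space Q. leading \<omega> k < Suc t} =
      prob {\<omega> \<in> space Q. leading \<omega> k < t} + prob {\<omega> \<in> space Q. leading \<omega> k = t}"
    by (simp only:) (rule finite_measure_Union, auto)
  then show ?case
    using Suc by (simp add: prob_leading_eq power_one_over add_divide_distrib)
qed simp

lemma prob_series_le_lower:
  assumes "t \<le> b ^ k" "real t \<le> x * real b ^ k"
  shows "real t / real b ^ k \<le> prob {\<omega> \<in> space Q. series \<omega> \<le> x}"
proof -
  have "{\<omega> \<in> space Q. leading \<omega> k < t} \<subseteq> {\<omega> \<in> space Q. series \<omega> \<le> x}"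
  proof safe
    fix \<omega> assume "leading \<omega> k < t"
    then have "(real (leading \<omega> k) + 1) / real b ^ k \<le> x"
      using assms(2) b by (simp add: pos_divide_le_eq)
    then show "series \<omega> \<le> x"
      using digit_series_bounds(2)[OF b] by (rule order_trans[rotated])
  qed
  then have "prob {\<omega> \<in> space Q. leading \<omega> k < t} \<le> prob {\<omega> \<in> space Q. series \<omega> \<le> x}"
    by (rule finite_measure_mono) measurable
  then show ?thesis
    unfolding prob_leading_less[OF assms(1)] .
qed

lemma prob_series_le_upper:
  assumes "x * real b ^ k < real t + 1"
  shows "prob {\<omega> \<in> space Q. series \<omega> \<le> x} \<le> (real t + 1) / real b ^ k"
proof -
  have "{\<omega> \<in> space Q. series \<omega> \<le> x} \<subseteq> {\<omega> \<in> space Q. leading \<omega> k < min (t + 1) (b ^ k)}"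
  proof safe
    fix \<omega> assume "series \<omega> \<le> x"
    then have "real (leading \<omega> k) / real b ^ k \<le> x"
      using digit_series_bounds(1)[OF b] by (rule order_trans[rotated])
    then have "leading \<omega> k < t + 1"
      using assms b by (simp add: pos_divide_le_eq)
    then show "leading \<omega> k < min (t + 1) (b ^ k)"
      using digits_nat_less b by simp
  qed
  then have "prob {\<omega> \<in> space Q. series \<omega> \<le> x} \<le> prob {\<omega> \<in> space Q. leading \<omega> k < min (t + 1) (b ^ k)}"
    by (rule finite_measure_mono[OF _ sets_leading_less])
  also have "\<dots> \<le> (real t + 1) / real b ^ k"
    unfolding prob_leading_less[OF min.cobounded2] by (intro divide_right_mono) auto
  finally show ?thesis .
qed

lemma prob_series_le_approx:
  assumes x: "0 \<le> x" "x \<le> 1"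
  shows "\<bar>prob {\<omega> \<in> space Q. series \<omega> \<le> x} - x\<bar> \<le> 1 / real b ^ k"
proof -
  let ?B = "real b ^ k"
  define t where "t = nat \<lfloor>x * ?B\<rfloor>"
  have B: "?B > 0" using b by simp
  have "0 \<le> x * ?B" using x B by simp
  then have t: "real t \<le> x * ?B" "x * ?B < real t + 1"
    unfolding t_def by linarith+
  moreover have "x * ?B \<le> ?B"
    using x B by simp
  ultimately have "t \<le> b ^ k"
    by (metis of_nat_le_iff of_nat_power order_trans)
  then have "real t / ?B \<le> prob {\<omega> \<in> space Q. series \<omega> \<le> x}"
    using t(1) by (rule prob_series_le_lower)
  moreover have "prob {\<omega> \<in> space Q. series \<omega> \<le> x} \<le> (real t + 1) / ?B"
    using t(2) by (rule prob_series_le_upper)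
  moreover have "x - 1 / ?B \<le> real t / ?B" "(real t + 1) / ?B \<le> x + 1 / ?B"
    using divide_right_mono[of "x * ?B - 1" "real t" ?B] divide_right_mono[of "real t + 1" "x * ?B + 1" ?B] t B
    by (simp_all add: diff_divide_distrib add_divide_distrib split: if_splits)
  ultimately show ?thesis
    by linarith
qed

lemma prob_series_le:
  assumes "0 \<le> x" "x \<le> 1"
  shows "prob {\<omega> \<in> space Q. series \<omega> \<le> x} = x"
proof (rule ccontr)
  let ?p = "prob {\<omega> \<in> space Q. series \<omega> \<le> x}"
  assume "?p \<noteq> x"
  then obtain k where "(1 / real b) ^ k < \<bar>?p - x\<bar>"
    using real_arch_pow_inv[of "\<bar>?p - x\<bar>" "1 / real b"] b by auto
  with prob_series_le_approx[OF assms, of k] show False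
    by (simp add: power_one_over)
qed

lemma distributed_affine_series:
  "distributed Q lborel (\<lambda>\<omega>. c + series \<omega> / real b ^ K)
     (\<lambda>s. indicator {c..c + 1 / real b ^ K} s / measure lborel {c..c + 1 / real b ^ K})"
proof (rule uniform_distrI_borel_atLeastAtMost)
  let ?B = "real b ^ K"
  have B: "?B > 0" using b by simp
  show "(\<lambda>\<omega>. c + series \<omega> / ?B) \<in> borel_measurable Q" by measurable
  show "c < c + 1 / ?B" using B by simp
  fix s assume s: "c \<le> s" "s \<le> c + 1 / ?B"
  have "{\<omega> \<in> space Q. c + series \<omega> / ?B \<le> s} = {\<omega> \<in> space Q. series \<omega> \<le> (s - c) * ?B}"
    using B by (simp add: field_simps)
  moreover have "0 \<le> (s - c) * ?B" "(s - c) * ?B \<le> 1"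
    using s B by (auto simp: field_simps)
  ultimately show "prob {\<omega> \<in> space Q. c + series \<omega> / ?B \<le> s} = (s - c) / (c + 1 / ?B - c)"
    using prob_series_le B by simp
qed

lemma AE_affine_series_notin:
  assumes "N \<in> null_sets lborel"
  shows "AE \<omega> in Q. c + series \<omega> / real b ^ K \<notin> N"
proof -
  note D = distributed_affine_series[of c K]
  have "AE s in density lborel (\<lambda>s. indicator {c..c + 1 / real b ^ K} s / measure lborel {c..c + 1 / real b ^ K}). s \<notin> N"
    using AE_not_in[OF assms] by (subst AE_density[OF distributed_borel_measurable[OF D]]) (auto elim: AE_mp)
  then show ?thesis
    by (intro AE_distrD[OF distributed_measurable[OF D]]) (simp only: distributed_distr_eq_density[OF D])
qed

lemma AE_series_notin: "N \<in> null_sets lborel \<Longrightarrow> AE \<omega> in Q. series \<omega> \<notin> N"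
  using AE_affine_series_notin[of N 0 0] by simp

end

section \<open>Fibres of infinite product measures\<close>

lemma distr_merge_PiM:
  assumes M: "\<And>i. prob_space (M i)" and IJ: "I \<inter> J = {}"
  shows "distr (PiM I M \<Otimes>\<^sub>M PiM J M) (PiM (I \<union> J) M) (merge I J) = PiM (I \<union> J) M"
proof (rule measure_eqI_PiM_infinite[symmetric, OF refl])
  interpret PI: prob_space "PiM I M" by (rule prob_space_PiM) (rule M)
  interpret PJ: prob_space "PiM J M" by (rule prob_space_PiM) (rule M)
  interpret PIJ: prob_space "PiM (I \<union> J) M" by (rule prob_space_PiM) (rule M)
  show "finite_measure (PiM (I \<union> J) M)" by unfold_locales
  fix A F assume F: "finite F" "F \<subseteq> I \<union> J" and A: "\<And>i. i \<in> F \<Longrightarrow> A i \<in> sets (M i)"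
  let ?X = "prod_emb (I \<union> J) M F (Pi\<^sub>E F A)"
  let ?XI = "prod_emb I M (F \<inter> I) (Pi\<^sub>E (F \<inter> I) A)"
  let ?XJ = "prod_emb J M (F \<inter> J) (Pi\<^sub>E (F \<inter> J) A)"
  have "PiM (I \<union> J) M ?X = (\<Prod>i\<in>F. M i (A i))"
    using M F A by (intro emeasure_PiM_emb) auto
  also have "\<dots> = (\<Prod>i\<in>F \<inter> I. M i (A i)) * (\<Prod>i\<in>F \<inter> J. M i (A i))"
  proof -
    have "F = (F \<inter> I) \<union> (F \<inter> J)" using F by auto
    then have "(\<Prod>i\<in>F. M i (A i)) = (\<Prod>i\<in>(F \<inter> I) \<union> (F \<inter> J). M i (A i))" by simp
    also have "\<dots> = (\<Prod>i\<in>F \<inter> I. M i (A i)) * (\<Prod>i\<in>F \<inter> J. M i (A i))"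
      using F IJ by (intro prod.union_disjoint) auto
    finally show ?thesis .
  qed
  also have "(\<Prod>i\<in>F \<inter> I. M i (A i)) = PiM I M ?XI"
    using M F A by (intro emeasure_PiM_emb[symmetric]) auto
  also have "(\<Prod>i\<in>F \<inter> J. M i (A i)) = PiM J M ?XJ"
    using M F A by (intro emeasure_PiM_emb[symmetric]) auto
  also have "PiM I M ?XI * PiM J M ?XJ = (PiM I M \<Otimes>\<^sub>M PiM J M) (?XI \<times> ?XJ)"
    using F A by (intro PJ.emeasure_pair_measure_Times[symmetric] sets_PiM_I) auto
  also have "?XI \<times> ?XJ = merge I J -` ?X \<inter> space (PiM I M \<Otimes>\<^sub>M PiM J M)"
    using IJ F A[THEN sets.sets_into_space] disjoint_iff[THEN iffD1, OF IJ]
    by (auto simp: prod_emb_def space_pair_measure space_PiM PiE_iff merge_def extensional_def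
        split: if_split_asm; blast)
  finally show "PiM (I \<union> J) M ?X = distr (PiM I M \<Otimes>\<^sub>M PiM J M) (PiM (I \<union> J) M) (merge I J) ?X"
    using F A by (subst emeasure_distr) (auto intro!: sets_PiM_I)
qed simp

lemma AE_PiM_by_fibres:
  assumes M: "\<And>i. prob_space (M i)"
    and P: "Measurable.pred (PiM UNIV M) P"
    and fibres: "\<And>\<omega>. AE \<omega>' in PiM J M. P (merge (- J) J (\<omega>, \<omega>'))"
  shows "AE \<omega> in PiM UNIV M. P \<omega>"
proof -
  let ?P1 = "PiM (- J) M" and ?P2 = "PiM J M"
  interpret P1: prob_space ?P1 by (rule prob_space_PiM) (rule M)
  interpret P2: prob_space ?P2 by (rule prob_space_PiM) (rule M)
  interpret pair_prob_space ?P1 ?P2 by unfold_locales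
  have merge: "merge (- J) J \<in> measurable (?P1 \<Otimes>\<^sub>M ?P2) (PiM UNIV M)"
    using measurable_merge[of "- J" J M] by simp
  have "AE z in ?P1 \<Otimes>\<^sub>M ?P2. P (merge (- J) J z)"
  proof (rule AE_pair_measure)
    show "{z \<in> space (?P1 \<Otimes>\<^sub>M ?P2). P (merge (- J) J z)} \<in> sets (?P1 \<Otimes>\<^sub>M ?P2)"
      using measurable_compose[OF merge P] by (simp add: pred_def)
  qed (use fibres in auto)
  then have "AE \<omega> in distr (?P1 \<Otimes>\<^sub>M ?P2) (PiM UNIV M) (merge (- J) J). P \<omega>"
    using P by (subst AE_distr_iff[OF merge]) (auto simp: pred_def)
  also have "distr (?P1 \<Otimes>\<^sub>M ?P2) (PiM UNIV M) (merge (- J) J) = PiM UNIV M"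
    using distr_merge_PiM[of M "- J" J] M by simp
  finally show ?thesis .
qed

lemma scramble_space_eq: "scramble_space b = PiM UNIV (\<lambda>_. uniform_perm b)"
  by (simp add: scramble_space_def digit_perms_def)

lemma AE_digit_perms: "AE \<sigma> in PiM UNIV (\<lambda>_. uniform_perm b). \<forall>i :: 'i :: countable. \<sigma> i \<in> digit_perms b"
  by (subst AE_all_countable, intro allI AE_PiM_component)
     (auto simp: measure_pmf.prob_space_axioms AE_measure_pmf_iff digit_perms_nonempty finite_digit_perms)

definition clipped_scramble_point :: "nat \<Rightarrow> ('d::finite \<times> nat list \<Rightarrow> nat \<Rightarrow> nat) \<Rightarrow> real^'d \<Rightarrow> real^'d" where
  "clipped_scramble_point b \<sigma> x =
     (\<chi> j. digit_series b (\<lambda>k. \<sigma> (j, digit_prefix b (x $ j) (Suc k)) (digit b (x $ j) (Suc k))))"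

lemma length_digit_prefix[simp]: "length (digit_prefix b a k) = k - 1"
  by (simp add: digit_prefix_def)

lemma digit_less: "0 < b \<Longrightarrow> digit b a k < b"
  by (simp add: digit_def)

lemma take_digit_prefix: "K \<le> k \<Longrightarrow> take K (digit_prefix b a (Suc k)) = digit_prefix b a (Suc K)"
  by (simp add: digit_prefix_def take_map take_upt del: upt_Suc)

lemma scramble_point_eq_clipped:
  assumes "2 \<le> b" "\<forall>i. \<sigma> i \<in> digit_perms b"
  shows "scramble_point b \<sigma> x = clipped_scramble_point b \<sigma> x"
proof -
  have "clip_digit b (\<sigma> i (digit b a k)) = \<sigma> i (digit b a k)" for i a k
    using assms(1) by (intro clip_digit_id digit_perms_less[OF assms(2)[rule_format] digit_less]) simp
  then show ?thesis
    unfolding scramble_point_def clipped_scramble_point_def scramble_coord_def digit_series_def by simp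
qed

lemma random_digit_series_prefix_nodes:
  assumes "2 \<le> b" "\<And>k. (j, digit_prefix b a (Suc (k + K))) \<in> I"
  shows "random_digit_series b I (\<lambda>k. (j, digit_prefix b a (Suc (k + K)))) (\<lambda>k. digit b a (Suc (k + K)))"
proof
  show "inj (\<lambda>k. (j, digit_prefix b a (Suc (k + K))))"
    by (rule injI) (metis length_digit_prefix add_right_cancel diff_Suc_1 prod.inject)
qed (use assms digit_less in auto)

lemma random_digit_series_coordinate:
  "2 \<le> b \<Longrightarrow> random_digit_series b UNIV (\<lambda>k. (j, digit_prefix b a (Suc k))) (\<lambda>k. digit b a (Suc k))"
  using random_digit_series_prefix_nodes[of b j a 0 UNIV] by simp

lemma borel_measurable_vecI:
  fixes f :: "'a \<Rightarrow> real^'n"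
  assumes "\<And>j. (\<lambda>\<omega>. f \<omega> $ j) \<in> borel_measurable M"
  shows "f \<in> borel_measurable M"
proof (rule borel_measurable_euclidean_space[THEN iffD2], intro ballI)
  fix i :: "real^'n" assume "i \<in> Basis"
  then obtain j where "i = axis j 1" by (auto simp: Basis_vec_def)
  then show "(\<lambda>x. f x \<bullet> i) \<in> borel_measurable M"
    using assms[of j] by (simp add: cart_eq_inner_axis[symmetric])
qed

lemma measurable_clipped_scramble_point:
  assumes "2 \<le> b"
  shows "(\<lambda>\<sigma>. clipped_scramble_point b \<sigma> x) \<in> borel_measurable (PiM UNIV (\<lambda>_. uniform_perm b))"
proof (rule borel_measurable_vecI)
  fix j
  interpret random_digit_series b UNIV "\<lambda>k. (j, digit_prefix b (x $ j) (Suc k))" "\<lambda>k. digit b (x $ j) (Suc k)"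
    using assms by (rule random_digit_series_coordinate)
  show "(\<lambda>\<sigma>. clipped_scramble_point b \<sigma> x $ j) \<in> borel_measurable Q"
    using measurable_series by (simp add: clipped_scramble_point_def)
qed

lemma AE_clipped_scramble_point_in_box:
  assumes b: "2 \<le> b"
  shows "AE \<sigma> in PiM UNIV (\<lambda>_. uniform_perm b). clipped_scramble_point b \<sigma> x \<in> box 0 1"
proof -
  have "AE \<sigma> in PiM UNIV (\<lambda>_. uniform_perm b).
      0 < clipped_scramble_point b \<sigma> x $ j \<and> clipped_scramble_point b \<sigma> x $ j < 1" for j
  proof -
    interpret random_digit_series b UNIV "\<lambda>k. (j, digit_prefix b (x $ j) (Suc k))" "\<lambda>k. digit b (x $ j) (Suc k)"
      using b by (rule random_digit_series_coordinate)
    have "AE \<sigma> in Q. series \<sigma> \<notin> {0, 1}"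
      by (rule AE_series_notin) (simp add: finite_imp_null_set_lborel)
    then show ?thesis
    proof (rule eventually_mono)
      fix \<sigma> assume "series \<sigma> \<notin> {0, 1}"
      moreover have "0 \<le> series \<sigma>" "series \<sigma> \<le> 1"
        using digit_series_nonneg[OF b] digit_series_le_1[OF b] .
      ultimately show "0 < clipped_scramble_point b \<sigma> x $ j \<and> clipped_scramble_point b \<sigma> x $ j < 1"
        by (simp add: clipped_scramble_point_def less_le)
    qed
  qed
  then have "AE \<sigma> in PiM UNIV (\<lambda>_. uniform_perm b).
      \<forall>j\<in>UNIV. 0 < clipped_scramble_point b \<sigma> x $ j \<and> clipped_scramble_point b \<sigma> x $ j < 1"
    by (intro AE_finite_allI) auto
  then show ?thesis
    by (rule eventually_mono) (simp add: mem_box_cart)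
qed

section \<open>Distinct points have almost surely distinct scrambled values\<close>

lemma AE_line_avoids_level:
  fixes g :: "real^'d::finite \<Rightarrow> real" and Z :: "'a \<Rightarrow> real"
  assumes g: "(\<lambda>z. indicator (box 0 1) z * g z) \<in> borel_measurable borel"
    and cont: "\<And>z c. z \<in> box 0 1 \<Longrightarrow>
       emeasure lborel {s \<in> {0<..<1}. g (\<chi> k. if k = j then s else z $ k) = c} = 0"
    and Z: "\<And>N. N \<in> null_sets lborel \<Longrightarrow> AE \<omega> in M. Z \<omega> \<notin> N"
  shows "AE \<omega> in M. (\<chi> k. if k = j then Z \<omega> else w $ k) \<in> box 0 1 \<longrightarrow>
           g (\<chi> k. if k = j then Z \<omega> else w $ k) \<noteq> c"
proof -
  define line where "line s = (\<chi> k. if k = j then s else w $ k)" for s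
  have line_in_box: "line s \<in> box 0 1 \<longleftrightarrow> (0 < s \<and> s < 1) \<and> (\<forall>k. k \<noteq> j \<longrightarrow> 0 < w $ k \<and> w $ k < 1)" for s
    unfolding line_def mem_box_cart by force
  show ?thesis
  proof (cases "\<forall>k. k \<noteq> j \<longrightarrow> 0 < w $ k \<and> w $ k < 1")
    case False
    then show ?thesis
      using line_in_box by (intro AE_I2) (auto simp: line_def)
  next
    case True
    define N where "N = {s \<in> {0<..<1}. g (line s) = c}"
    have [measurable]: "line \<in> borel_measurable borel"
      by (rule borel_measurable_vecI) (simp add: line_def)
    have "N = {s \<in> {0<..<1}. indicator (box 0 1) (line s) * g (line s) = c}"
      using True line_in_box by (auto simp: N_def)
    also have "\<dots> \<in> sets borel"
      using g by measurable
    finally have "N \<in> sets borel" .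
    moreover have "(\<chi> k. if k = j then s else line (1/2) $ k) = line s" for s
      by (simp add: line_def vec_eq_iff)
    then have "emeasure lborel N = 0"
      using cont[of "line (1/2)" c] True line_in_box by (simp add: N_def)
    ultimately have "AE \<omega> in M. Z \<omega> \<notin> N"
      by (intro Z null_setsI) auto
    then show ?thesis
      by (rule eventually_mono) (use line_in_box in \<open>auto simp: N_def line_def\<close>)
  qed
qed

definition digit_subtree :: "'d \<Rightarrow> nat list \<Rightarrow> ('d \<times> nat list) set" where
  "digit_subtree j ds = {(j, ds') | ds'. length ds \<le> length ds' \<and> take (length ds) ds' = ds}"

lemma prefix_node_in_digit_subtree:
  "(i, digit_prefix b a (Suc k)) \<in> digit_subtree j (digit_prefix b c (Suc K)) \<longleftrightarrow>
     i = j \<and> K \<le> k \<and> digit_prefix b a (Suc K) = digit_prefix b c (Suc K)"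
  by (auto simp: digit_subtree_def take_digit_prefix)

lemma merge_apply_compl: "merge (- J) J (\<omega>, \<omega>') i = (if i \<in> J then \<omega>' i else \<omega> i)"
  by (simp add: merge_def)

lemma clipped_scramble_point_merge_outside:
  assumes "\<And>j k. (j, digit_prefix b (y $ j) (Suc k)) \<notin> J"
  shows "clipped_scramble_point b (merge (- J) J (\<omega>, \<omega>')) y = clipped_scramble_point b \<omega> y"
  using assms by (simp add: clipped_scramble_point_def merge_apply_compl)

lemma clipped_scramble_point_merge_subtree:
  fixes x :: "real^'d::finite" and j :: 'd and K :: nat
  assumes "2 \<le> b"
  defines "J \<equiv> digit_subtree j (digit_prefix b (x $ j) (Suc K))"
  shows "clipped_scramble_point b (merge (- J) J (\<omega>, \<omega>')) x =
    (\<chi> i. if i = j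
      then (\<Sum>k<K. real (clip_digit b (\<omega> (j, digit_prefix b (x $ j) (Suc k)) (digit b (x $ j) (Suc k)))) / real b ^ Suc k)
        + digit_series b (\<lambda>k. \<omega>' (j, digit_prefix b (x $ j) (Suc (k + K))) (digit b (x $ j) (Suc (k + K)))) / real b ^ K
      else clipped_scramble_point b \<omega> x $ i)"
proof -
  let ?f = "\<lambda>k. merge (- J) J (\<omega>, \<omega>') (j, digit_prefix b (x $ j) (Suc k)) (digit b (x $ j) (Suc k))"
  have "digit_series b ?f =
      (\<Sum>k<K. real (clip_digit b (?f k)) / real b ^ Suc k) + digit_series b (\<lambda>k. ?f (k + K)) / real b ^ K"
    by (rule digit_series_shift[OF assms(1)])
  then show ?thesis
    by (simp add: vec_eq_iff clipped_scramble_point_def merge_apply_compl J_def prefix_node_in_digit_subtree)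
qed

lemma AE_clipped_scrambled_values_differ:
  fixes x y :: "real^'d::finite" and g :: "real^'d \<Rightarrow> real"
  assumes b: "2 \<le> b"
    and g: "(\<lambda>z. indicator (box 0 1) z * g z) \<in> borel_measurable borel"
    and cont: "\<And>z c. z \<in> box 0 1 \<Longrightarrow>
       emeasure lborel {s \<in> {0<..<1}. g (\<chi> k. if k = j then s else z $ k) = c} = 0"
    and prefix: "digit_prefix b (x $ j) (Suc K) \<noteq> digit_prefix b (y $ j) (Suc K)"
  shows "AE \<sigma> in PiM UNIV (\<lambda>_. uniform_perm b).
    clipped_scramble_point b \<sigma> x \<in> box 0 1 \<and> clipped_scramble_point b \<sigma> y \<in> box 0 1 \<longrightarrow>
    g (clipped_scramble_point b \<sigma> x) \<noteq> g (clipped_scramble_point b \<sigma> y)"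
proof -
  define J where "J = digit_subtree j (digit_prefix b (x $ j) (Suc K))"
  \<comment> \<open>only \<open>G\<close> is known to be measurable; it agrees with \<open>g\<close> on the open cube\<close>
  define G :: "real^'d \<Rightarrow> real" where "G = (\<lambda>z. indicator (box 0 1) z * g z)"
  let ?P = "\<lambda>\<sigma>. clipped_scramble_point b \<sigma> x \<in> box 0 1 \<and> clipped_scramble_point b \<sigma> y \<in> box 0 1 \<longrightarrow>
    G (clipped_scramble_point b \<sigma> x) \<noteq> G (clipped_scramble_point b \<sigma> y)"
  have [measurable]: "G \<in> borel_measurable borel" "box 0 1 \<in> sets (borel :: (real^'d) measure)"
    using g by (simp_all add: G_def borel_open)
  note [measurable] = measurable_clipped_scramble_point[OF b]
  have [measurable]: "Measurable.pred (PiM UNIV (\<lambda>_. uniform_perm b))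
      (\<lambda>\<sigma>. G (clipped_scramble_point b \<sigma> x) \<noteq> G (clipped_scramble_point b \<sigma> y))"
    unfolding pred_def by (intro borel_measurable_neq) measurable
  have "AE \<sigma> in PiM UNIV (\<lambda>_. uniform_perm b). ?P \<sigma>"
  proof (rule AE_PiM_by_fibres[where J = J])
    fix \<omega>
    have "random_digit_series b J (\<lambda>k. (j, digit_prefix b (x $ j) (Suc (k + K)))) (\<lambda>k. digit b (x $ j) (Suc (k + K)))"
      unfolding J_def using b by (intro random_digit_series_prefix_nodes) (simp_all add: prefix_node_in_digit_subtree)
    then interpret random_digit_series b J "\<lambda>k. (j, digit_prefix b (x $ j) (Suc (k + K)))" "\<lambda>k. digit b (x $ j) (Suc (k + K))" .
    let ?c = "(\<Sum>k<K. real (clip_digit b (\<omega> (j, digit_prefix b (x $ j) (Suc k)) (digit b (x $ j) (Suc k)))) / real b ^ Suc k)"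
    have "AE \<omega>' in Q.
        (\<chi> i. if i = j then ?c + series \<omega>' / real b ^ K else clipped_scramble_point b \<omega> x $ i) \<in> box 0 1 \<longrightarrow>
        g (\<chi> i. if i = j then ?c + series \<omega>' / real b ^ K else clipped_scramble_point b \<omega> x $ i) \<noteq>
        g (clipped_scramble_point b \<omega> y)"
      by (rule AE_line_avoids_level[OF g cont AE_affine_series_notin])
    moreover have "clipped_scramble_point b (merge (- J) J (\<omega>, \<omega>')) y = clipped_scramble_point b \<omega> y" for \<omega>'
      using prefix by (intro clipped_scramble_point_merge_outside) (auto simp: J_def prefix_node_in_digit_subtree)
    moreover note clipped_scramble_point_merge_subtree[OF b, of j x K, folded J_def]
    ultimately show "AE \<omega>' in Q. ?P (merge (- J) J (\<omega>, \<omega>'))"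
      by (elim eventually_mono) (simp add: G_def)
  qed (rule measure_pmf.prob_space_axioms, measurable)
  then show ?thesis
    by (rule eventually_mono) (simp add: G_def)
qed

lemma floor_mult_power_Suc:
  assumes "2 \<le> b" "0 \<le> a"
  shows "\<lfloor>a * real b ^ Suc k\<rfloor> = int b * \<lfloor>a * real b ^ k\<rfloor> + int (digit b a (Suc k))"
proof -
  let ?F = "\<lfloor>a * real b ^ Suc k\<rfloor>"
  have "\<lfloor>a * real b ^ k\<rfloor> = \<lfloor>(a * real b ^ Suc k) / real_of_int (int b)\<rfloor>"
    using assms(1) by simp
  also have "\<dots> = ?F div int b"
    by (rule floor_divide_real_eq_div) simp
  finally have "\<lfloor>a * real b ^ k\<rfloor> = ?F div int b" .
  moreover have "int (digit b a (Suc k)) = ?F mod int b"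
    unfolding digit_def using assms by (simp add: zmod_int)
  ultimately show ?thesis by simp
qed

lemma floor_mult_power_eq_if_digit_prefix_eq:
  assumes b: "2 \<le> b" and a: "0 \<le> a" "a < 1" and c: "0 \<le> c" "c < 1"
  shows "digit_prefix b a (Suc k) = digit_prefix b c (Suc k) \<Longrightarrow> \<lfloor>a * real b ^ k\<rfloor> = \<lfloor>c * real b ^ k\<rfloor>"
proof (induction k)
  case 0
  have "\<lfloor>a\<rfloor> = 0" "\<lfloor>c\<rfloor> = 0"
    using a c by (simp_all add: floor_eq_iff)
  then show ?case by simp
next
  case (Suc k)
  have "digit_prefix b a (Suc (Suc k)) = digit_prefix b a (Suc k) @ [digit b a (Suc k)]" for a
    by (simp add: digit_prefix_def)
  then have "digit_prefix b a (Suc k) = digit_prefix b c (Suc k)" "digit b a (Suc k) = digit b c (Suc k)"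
    using Suc.prems by simp_all
  then show ?case
    using Suc.IH floor_mult_power_Suc[OF b a(1), of k] floor_mult_power_Suc[OF b c(1), of k] by simp
qed

lemma exists_digit_prefix_neq:
  assumes b: "2 \<le> b" and a: "0 \<le> a" "a < 1" and c: "0 \<le> c" "c < 1" and "a \<noteq> c"
  obtains k where "digit_prefix b a (Suc k) \<noteq> digit_prefix b c (Suc k)"
proof -
  obtain k where k: "(1 / real b) ^ k < \<bar>a - c\<bar>"
    using real_arch_pow_inv[of "\<bar>a - c\<bar>" "1 / real b"] b \<open>a \<noteq> c\<close> by auto
  have "digit_prefix b a (Suc k) \<noteq> digit_prefix b c (Suc k)"
  proof
    assume "digit_prefix b a (Suc k) = digit_prefix b c (Suc k)"
    then have "\<lfloor>a * real b ^ k\<rfloor> = \<lfloor>c * real b ^ k\<rfloor>"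
      by (rule floor_mult_power_eq_if_digit_prefix_eq[OF b a c])
    then have "\<bar>a * real b ^ k - c * real b ^ k\<bar> < 1"
      by linarith
    then have "\<bar>a - c\<bar> < 1 / real b ^ k"
      using b by (simp add: pos_less_divide_eq abs_mult left_diff_distrib[symmetric])
    with k show False by (simp add: power_one_over)
  qed
  then show ?thesis by (rule that)
qed

lemma AE_scrambled_values_differ:
  fixes x y :: "real^'d::finite" and g :: "real^'d \<Rightarrow> real"
  assumes b: "2 \<le> b"
    and g: "(\<lambda>z. indicator (box 0 1) z * g z) \<in> borel_measurable borel"
    and cont: "\<And>z j c. z \<in> box 0 1 \<Longrightarrow>
       emeasure lborel {s \<in> {0<..<1}. g (\<chi> k. if k = j then s else z $ k) = c} = 0"
    and x: "\<And>j. 0 \<le> x $ j \<and> x $ j < 1" and y: "\<And>j. 0 \<le> y $ j \<and> y $ j < 1" and "x \<noteq> y"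
  shows "AE \<sigma> in scramble_space b. g (scramble_point b \<sigma> x) \<noteq> g (scramble_point b \<sigma> y)"
proof -
  obtain j where "x $ j \<noteq> y $ j"
    using \<open>x \<noteq> y\<close> by (auto simp: vec_eq_iff)
  then obtain K where K: "digit_prefix b (x $ j) (Suc K) \<noteq> digit_prefix b (y $ j) (Suc K)"
    using exists_digit_prefix_neq[OF b] x[of j] y[of j] by blast
  have "AE \<sigma> in PiM UNIV (\<lambda>_. uniform_perm b).
      clipped_scramble_point b \<sigma> x \<in> box 0 1 \<and> clipped_scramble_point b \<sigma> y \<in> box 0 1 \<longrightarrow>
      g (clipped_scramble_point b \<sigma> x) \<noteq> g (clipped_scramble_point b \<sigma> y)"
    by (rule AE_clipped_scrambled_values_differ[OF b g cont[of _ j] K])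
  then show ?thesis
    using AE_digit_perms AE_clipped_scramble_point_in_box[OF b, of x] AE_clipped_scramble_point_in_box[OF b, of y]
    unfolding scramble_space_eq by eventually_elim (simp add: scramble_point_eq_clipped[OF b])
qed

section \<open>Repeated net points and the empirical quantile\<close>

lemma floor_cell_in_elem_interval:
  fixes w :: "real^'d::finite"
  assumes b: "0 < b" and w: "\<And>j. 0 \<le> w $ j \<and> w $ j < 1"
  shows "w \<in> elem_interval b k (\<lambda>j. nat \<lfloor>w $ j * real b ^ k j\<rfloor>)"
    and "nat \<lfloor>w $ j * real b ^ k j\<rfloor> < b ^ k j"
proof -
  have B: "real b ^ k j > 0" for j using b by simp
  have floor: "real (nat \<lfloor>w $ j * real b ^ k j\<rfloor>) \<le> w $ j * real b ^ k j"
      "w $ j * real b ^ k j < real (nat \<lfloor>w $ j * real b ^ k j\<rfloor>) + 1" for j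
    using w[of j] B[of j] by (simp_all add: of_nat_nat)
  then show "w \<in> elem_interval b k (\<lambda>j. nat \<lfloor>w $ j * real b ^ k j\<rfloor>)"
    using B by (simp add: elem_interval_def pos_divide_le_eq pos_less_divide_eq)
  have "w $ j * real b ^ k j < real b ^ k j"
    using w[of j] B[of j] by simp
  then have "real (nat \<lfloor>w $ j * real b ^ k j\<rfloor>) < real (b ^ k j)"
    using floor(1)[of j] by simp
  then show "nat \<lfloor>w $ j * real b ^ k j\<rfloor> < b ^ k j"
    by (rule of_nat_less_imp_less)
qed

text \<open>All copies of a repeated point lie in one elementary interval of volume \<open>b ^ (t - m)\<close>.\<close>
lemma card_tmd_net_repeats:
  fixes u :: "nat \<Rightarrow> real^'d::finite"
  assumes net: "is_tmd_net b t m u" and b: "0 < b" and "i0 < b ^ m"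
  shows "card {i. i < b ^ m \<and> u i = u i0} \<le> b ^ t"
proof -
  obtain j0 :: 'd where True by simp
  define k where "k j = (if j = j0 then m - t else 0)" for j
  define T where "T j = nat \<lfloor>u i0 $ j * real b ^ k j\<rfloor>" for j
  have "\<And>j. 0 \<le> u i0 $ j \<and> u i0 $ j < 1"
    using net \<open>i0 < b ^ m\<close> by (simp add: is_tmd_net_def)
  note cell = floor_cell_in_elem_interval[OF b this, where k = k, folded T_def]
  have "(\<Sum>j\<in>UNIV. k j) = m - t"
    by (simp add: k_def)
  then have "card {i. i < b ^ m \<and> u i \<in> elem_interval b k T} = b ^ t"
    using net cell(2) unfolding is_tmd_net_def by blast
  moreover have "card {i. i < b ^ m \<and> u i = u i0} \<le> card {i. i < b ^ m \<and> u i \<in> elem_interval b k T}"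
    using cell(1) by (intro card_mono) auto
  ultimately show ?thesis
    by simp
qed

lemma emp_cdf_mono: "y \<le> y' \<Longrightarrow> emp_cdf n L y \<le> emp_cdf n L y'"
  unfolding emp_cdf_def by (intro divide_right_mono) (auto intro!: card_mono)

lemma emp_cdf_at_largest_value_below:
  assumes "0 < emp_cdf n L y"
  obtains i where "i < n" "L i \<le> y" "emp_cdf n L (L i) = emp_cdf n L y"
proof -
  let ?V = "L ` {i. i < n \<and> L i \<le> y}"
  have "{i. i < n \<and> L i \<le> y} \<noteq> {}"
  proof
    assume "{i. i < n \<and> L i \<le> y} = {}"
    then have "emp_cdf n L y = 0"
      by (simp add: emp_cdf_def)
    with assms show False by simp
  qed
  then have "Max ?V \<in> ?V"
    by (intro Max_in) auto
  then obtain i where i: "i < n" "L i \<le> y" "L i = Max ?V"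
    by auto
  have "L j \<le> L i" if "j < n" "L j \<le> y" for j
    unfolding i(3) using that by (intro Max_ge) auto
  then have "{j. j < n \<and> L j \<le> L i} = {j. j < n \<and> L j \<le> y}"
    using i(2) by force
  then have "emp_cdf n L (L i) = emp_cdf n L y"
    unfolding emp_cdf_def by (simp only:)
  with i(1,2) show ?thesis
    by (rule that)
qed

lemma emp_quantile_least:
  fixes L :: "nat \<Rightarrow> real"
  assumes n: "0 < n" and \<alpha>: "0 < \<alpha>" "\<alpha> \<le> 1"
  shows "\<alpha> \<le> emp_cdf n L (Inf {y. \<alpha> \<le> emp_cdf n L y})"
    and "\<And>y. \<alpha> \<le> emp_cdf n L y \<Longrightarrow> Inf {y. \<alpha> \<le> emp_cdf n L y} \<le> y"
proof -
  let ?F = "emp_cdf n L"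
  define C where "C = {y \<in> L ` {..<n}. \<alpha> \<le> ?F y}"
  have dominated: "\<exists>y'\<in>C. y' \<le> y" if "\<alpha> \<le> ?F y" for y
  proof -
    have "0 < ?F y"
      using that \<alpha> by linarith
    then obtain i where "i < n" "L i \<le> y" "?F (L i) = ?F y"
      by (rule emp_cdf_at_largest_value_below)
    moreover from this have "L i \<in> C"
      using that by (simp add: C_def)
    ultimately show ?thesis
      by blast
  qed
  have "{i. i < n \<and> L i \<le> Max (L ` {..<n})} = {..<n}"
    by (auto intro: Max_ge)
  then have "?F (Max (L ` {..<n})) = 1"
    using n by (simp add: emp_cdf_def)
  then have "C \<noteq> {}"
    using dominated[of "Max (L ` {..<n})"] \<alpha> by auto
  moreover have "finite C"
    by (simp add: C_def)
  ultimately have min_C: "Min C \<in> C" "\<And>y. \<alpha> \<le> ?F y \<Longrightarrow> Min C \<le> y"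
    using dominated by (auto intro: Min_in Min_le order_trans)
  then have "Inf {y. \<alpha> \<le> ?F y} = Min C"
    by (intro cInf_eq_minimum) (auto simp: C_def)
  then show "\<alpha> \<le> ?F (Inf {y. \<alpha> \<le> ?F y})" "\<And>y. \<alpha> \<le> ?F y \<Longrightarrow> Inf {y. \<alpha> \<le> ?F y} \<le> y"
    using min_C by (auto simp: C_def)
qed

text \<open>Strictly below the quantile the empirical CDF is \<open>< \<alpha>\<close>, so the jump at the
  quantile, of size at most \<open>B / n\<close>, is all that can overshoot \<open>\<alpha>\<close>.\<close>
lemma emp_cdf_quantile_le:
  fixes L :: "nat \<Rightarrow> real"
  assumes n: "0 < n" and \<alpha>: "0 < \<alpha>" "\<alpha> \<le> 1"
    and mult: "\<And>y. card {i. i < n \<and> L i = y} \<le> B"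
  shows "emp_cdf n L (Inf {y. \<alpha> \<le> emp_cdf n L y}) \<le> \<alpha> + real B / real n"
proof -
  define q where "q = Inf {y. \<alpha> \<le> emp_cdf n L y}"
  have below: "real (card {i. i < n \<and> L i < q}) / real n < \<alpha>"
  proof (cases "{i. i < n \<and> L i < q} = {}")
    case False
    define y where "y = Max (L ` {i. i < n \<and> L i < q})"
    have "y \<in> L ` {i. i < n \<and> L i < q}"
      unfolding y_def using False by (intro Max_in) auto
    then have "y < q" by auto
    then have "emp_cdf n L y < \<alpha>"
      using emp_quantile_least(2)[OF n \<alpha>, of L y] unfolding q_def by (meson not_le)
    moreover have "{i. i < n \<and> L i < q} = {i. i < n \<and> L i \<le> y}"
      using \<open>y < q\<close> by (auto simp: y_def intro: Max_ge)
    ultimately show ?thesis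
      by (simp add: emp_cdf_def)
  next
    case True
    show ?thesis
      unfolding True using \<alpha> by simp
  qed
  have "{i. i < n \<and> L i \<le> q} = {i. i < n \<and> L i < q} \<union> {i. i < n \<and> L i = q}"
    by auto
  then have "card {i. i < n \<and> L i \<le> q} = card {i. i < n \<and> L i < q} + card {i. i < n \<and> L i = q}"
    by (simp add: card_Un_disjoint disjoint_iff)
  then have "emp_cdf n L q = real (card {i. i < n \<and> L i < q}) / real n + real (card {i. i < n \<and> L i = q}) / real n"
    by (simp add: emp_cdf_def add_divide_distrib)
  also have "\<dots> \<le> \<alpha> + real B / real n"
    using below divide_right_mono[of "real (card {i. i < n \<and> L i = q})" "real B" "real n"] mult[of q]
    by simp
  finally show ?thesis
    unfolding q_def .
qed

lemma emp_quantile_deviation: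
  fixes L :: "nat \<Rightarrow> real"
  assumes n: "0 < n" and \<alpha>: "0 < \<alpha>" "\<alpha> \<le> 1"
    and mult: "\<And>y. card {i. i < n \<and> L i = y} \<le> B"
  shows "\<bar>emp_cdf n L (Inf {y. \<alpha> \<le> emp_cdf n L y}) - emp_cdf n L v\<bar> \<le> real B / real n + \<bar>emp_cdf n L v - \<alpha>\<bar>"
proof (cases "\<alpha> \<le> emp_cdf n L v")
  case True
  then have "emp_cdf n L (Inf {y. \<alpha> \<le> emp_cdf n L y}) \<le> emp_cdf n L v"
    by (intro emp_cdf_mono emp_quantile_least(2)[OF n \<alpha>])
  moreover have "0 \<le> real B / real n"
    by simp
  ultimately show ?thesis
    using True emp_quantile_least(1)[OF n \<alpha>, of L] by linarith
next
  case False
  then show ?thesis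
    using emp_quantile_least(1)[OF n \<alpha>, of L] emp_cdf_quantile_le[OF n \<alpha> mult] by simp
qed

lemma card_level_set_le:
  fixes n :: nat
  assumes separating: "\<forall>i\<in>{..<n}. \<forall>l\<in>{..<n}. u i \<noteq> u l \<longrightarrow> L i \<noteq> L l"
    and repeats: "\<And>i0. i0 < n \<Longrightarrow> card {i. i < n \<and> u i = u i0} \<le> B"
  shows "card {i. i < n \<and> L i = y} \<le> B"
proof (cases "\<exists>i0<n. L i0 = y")
  case True
  then obtain i0 where "i0 < n" "L i0 = y" by blast
  then have "card {i. i < n \<and> L i = y} \<le> card {i. i < n \<and> u i = u i0}"
    using separating by (intro card_mono) auto
  also have "\<dots> \<le> B"
    using repeats \<open>i0 < n\<close> .
  finally show ?thesis .
next
  case False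
  then have empty: "{i. i < n \<and> L i = y} = {}"
    by auto
  show ?thesis
    unfolding empty by simp
qed

lemma AE_scrambled_values_separate:
  fixes u :: "nat \<Rightarrow> real^'d::finite" and g :: "real^'d \<Rightarrow> real"
  assumes b: "2 \<le> b"
    and g: "(\<lambda>z. indicator (box 0 1) z * g z) \<in> borel_measurable borel"
    and cont: "\<And>z j c. z \<in> box 0 1 \<Longrightarrow>
       emeasure lborel {s \<in> {0<..<1}. g (\<chi> k. if k = j then s else z $ k) = c} = 0"
    and u: "\<And>i j. i < n \<Longrightarrow> 0 \<le> u i $ j \<and> u i $ j < 1"
  shows "AE \<sigma> in scramble_space b. \<forall>i\<in>{..<n}. \<forall>l\<in>{..<n}.
    u i \<noteq> u l \<longrightarrow> g (scramble_point b \<sigma> (u i)) \<noteq> g (scramble_point b \<sigma> (u l))"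
proof (intro AE_finite_allI)
  fix i l assume "i \<in> {..<n}" "l \<in> {..<n}"
  then have "i < n" "l < n"
    by simp_all
  show "AE \<sigma> in scramble_space b. u i \<noteq> u l \<longrightarrow> g (scramble_point b \<sigma> (u i)) \<noteq> g (scramble_point b \<sigma> (u l))"
  proof (cases "u i = u l")
    case False
    have "AE \<sigma> in scramble_space b. g (scramble_point b \<sigma> (u i)) \<noteq> g (scramble_point b \<sigma> (u l))"
      by (rule AE_scrambled_values_differ[OF b g _ u[OF \<open>i < n\<close>] u[OF \<open>l < n\<close>] False]) (rule cont)
    then show ?thesis
      by (rule eventually_mono) simp
  qed simp
qed simp_all

theorem lemma1:
  fixes \<alpha> :: real and b t m :: nat and \<Theta> :: "real set"
    and g :: "real \<Rightarrow> real^'d::finite \<Rightarrow> real"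
    and \<theta> :: real and u :: "nat \<Rightarrow> real^'d"
  assumes alpha: "0 < \<alpha>" "\<alpha> < 1"
    and b: "b \<ge> 2"
    and tm: "t \<le> m"
    and meas: "\<And>\<theta>. \<theta> \<in> \<Theta> \<Longrightarrow>
       (\<lambda>x. indicator (box 0 1) x * g \<theta> x) \<in> borel_measurable lborel"
    and cont: "\<And>\<theta> x j a c y. \<theta> \<in> \<Theta> \<Longrightarrow> x \<in> box 0 1 \<Longrightarrow> 0 \<le> a \<Longrightarrow> a < c \<Longrightarrow> c \<le> 1 \<Longrightarrow>
       emeasure lborel {s \<in> {a<..<c}. g \<theta> (\<chi> k. if k = j then s else x $ k) = y} = 0"
    and theta: "\<theta> \<in> \<Theta>"
    and net: "is_tmd_net b t m u"
  shows
    "let n = b ^ m;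
         v = Inf {y. measure lborel ({x. g \<theta> x \<le> y} \<inter> box 0 1) \<ge> \<alpha>}
     in AE \<sigma> in scramble_space b.
          (let L = (\<lambda>i. g \<theta> (scramble_point b \<sigma> (u i)));
               F = emp_cdf n L;
               vhat = Inf {y. F y \<ge> \<alpha>}
           in \<bar>F vhat - F v\<bar> \<le> real b ^ t / real n + \<bar>F v - \<alpha>\<bar>)"
proof -
  let ?L = "\<lambda>\<sigma> i. g \<theta> (scramble_point b \<sigma> (u i))"
  have g_meas: "(\<lambda>x. indicator (box 0 1) x * g \<theta> x) \<in> borel_measurable borel"
    using meas[OF theta] by simp
  have g_cont: "\<And>z j c. z \<in> box 0 1 \<Longrightarrow>
      emeasure lborel {s \<in> {0<..<1}. g \<theta> (\<chi> k. if k = j then s else z $ k) = c} = 0"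
    by (rule cont[OF theta]) auto
  have in_cube: "\<And>i j. i < b ^ m \<Longrightarrow> 0 \<le> u i $ j \<and> u i $ j < 1"
    using net by (simp add: is_tmd_net_def)
  have "AE \<sigma> in scramble_space b. \<forall>i\<in>{..<b ^ m}. \<forall>l\<in>{..<b ^ m}. u i \<noteq> u l \<longrightarrow> ?L \<sigma> i \<noteq> ?L \<sigma> l"
    by (rule AE_scrambled_values_separate[OF b g_meas _ in_cube]) (rule g_cont)
  then show ?thesis
    unfolding Let_def
  proof (rule eventually_mono)
    fix \<sigma> assume "\<forall>i\<in>{..<b ^ m}. \<forall>l\<in>{..<b ^ m}. u i \<noteq> u l \<longrightarrow> ?L \<sigma> i \<noteq> ?L \<sigma> l"
    then have "card {i. i < b ^ m \<and> ?L \<sigma> i = y} \<le> b ^ t" for y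
      by (rule card_level_set_le[OF _ card_tmd_net_repeats[OF net]]) (use b in simp)
    then show "\<bar>emp_cdf (b ^ m) (?L \<sigma>) (Inf {y. \<alpha> \<le> emp_cdf (b ^ m) (?L \<sigma>) y}) - emp_cdf (b ^ m) (?L \<sigma>) v\<bar>
        \<le> real b ^ t / real (b ^ m) + \<bar>emp_cdf (b ^ m) (?L \<sigma>) v - \<alpha>\<bar>" for v
      using emp_quantile_deviation[of "b ^ m" \<alpha> "?L \<sigma>" "b ^ t" v] alpha b by (simp add: of_nat_power)
  qed
qed

end
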